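(* Let $M_n$ be the number of Motzkin paths of length $n$ and let $b_n$ be the number of those Motzkin paths of length $n$ that have no horizontal step on level equal to their height. Then $$\lim_{n\to\infty}\frac{b_n}{M_n}=\frac12;$$ equivalently, asymptotically half of the Motzkin paths of length $n$ have a horizontal step on their maximal level (i.e. have odd amplitude) and half do not.
   Context: A Motzkin path of length $n$ is a sequence of $n$ steps, each an up-step $(1,1)$, a down-step $(1,-1)$ or a horizontal step $(1,0)$, starting at $(0,0)$, ending at $(n,0)$, and never going below the $x$-axis. Its height $h$ is the maximal $y$-coordinate reached. A horizontal step on level $j$ is a horizontal step from $(x,j)$ to $(x+1,j)$. The amplitude of a Motzkin path of height $h$ is $2h+1$ if it has a horizontal step on level $h$, and $2h$ otherwise. *)

theory Defs
  imports Complex_Main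
begin

datatype step = U | D | H

definition delta :: "step \<Rightarrow> int" where
  "delta s = (case s of U \<Rightarrow> 1 | D \<Rightarrow> -1 | H \<Rightarrow> 0)"

definition level :: "step list \<Rightarrow> nat \<Rightarrow> int" where
  "level p k = (\<Sum>i<k. delta (p ! i))"

definition motzkin :: "step list \<Rightarrow> bool" where
  "motzkin p \<longleftrightarrow> level p (length p) = 0 \<and> (\<forall>k \<le> length p. level p k \<ge> 0)"

definition height :: "step list \<Rightarrow> int" where
  "height p = Max ((level p) ` {0..length p})"

definition has_hstep_on :: "step list \<Rightarrow> int \<Rightarrow> bool" where
  "has_hstep_on p j \<longleftrightarrow> (\<exists>k < length p. p ! k = H \<and> level p k = j)"

definition motzkin_paths :: "nat \<Rightarrow> step list set" where
  "motzkin_paths n = {p. length p = n \<and> motzkin p}"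

definition M :: "nat \<Rightarrow> nat" where
  "M n = card (motzkin_paths n)"

definition b :: "nat \<Rightarrow> nat" where
  "b n = card {p \<in> motzkin_paths n. \<not> has_hstep_on p (height p)}"

end

theory Submission
  imports Defs "HOL-Real_Asymp.Real_Asymp"
begin

text \<open>Motzkin paths of length \<open>n\<close> with amplitude at most \<open>P - 3\<close> are the walks from level 0 to
  level 0 in a strip whose transfer matrix has the eigenvalues \<open>1 + 2 cos (2 \<pi> j / P)\<close>.
  Diagonalising it gives their number as \<open>3^n s(n, P)\<close>, where
  \<open>s(n, P) = (4 / P) \<Sum>{1 \<le> j \<le> P / 2} \<phi>(n, 2 \<pi> j / P)\<close> and \<open>\<phi>(n, t) = sin^2 t ((1 + 2 cos t) / 3)^n\<close>.
  Paths of amplitude exactly \<open>m\<close> are counted by a first difference in \<open>P\<close>, so \<open>2 b(n) - M(n)\<close> is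
  \<open>3^n\<close> times a sum over \<open>i \<le> n\<close> of second differences of \<open>s(n, -)\<close> at \<open>P = 2 i + 2\<close>.  As
  \<open>s(n, P)\<close> is a Riemann sum of a smooth function of \<open>j / P\<close>, each of these is \<open>O(1 / (n^2 P))\<close>, so
  \<open>2 b(n) - M(n) = O(3^n log n / n^2)\<close>; evaluating \<open>s(n, P)\<close> at a suitable large \<open>P\<close> shows
  \<open>M(n) \<ge> c 3^n / n^(3/2)\<close>.\<close>

section \<open>Walks in a strip\<close>

lemma level_0 [simp]: "level p 0 = 0"
  by (simp add: level_def)

lemma level_Suc: "level p (Suc k) = level p k + delta (p ! k)"
  by (simp add: level_def)

lemma level_append: "k \<le> length p \<Longrightarrow> level (p @ q) k = level p k"
  unfolding level_def by (intro sum.cong) (auto simp: nth_append)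

lemma level_snoc_length: "level (p @ [s]) (Suc (length p)) = level p (length p) + delta s"
  by (simp add: level_Suc level_append)

lemma delta_le_1: "delta s \<le> 1"
  by (cases s) (auto simp: delta_def)

lemma level_le: "level p k \<le> int k"
  by (induction k) (auto simp: level_Suc intro: add_mono[OF _ delta_le_1, THEN order_trans])

lemma finite_UNIV_step: "finite (UNIV :: step set)"
proof -
  have "(UNIV :: step set) = {U, D, H}" using step.exhaust by auto
  then show ?thesis by (metis finite.emptyI finite.insertI)
qed

lemma finite_step_lists_length: "finite {p :: step list. length p = n}"
  using finite_lists_length_eq[OF finite_UNIV_step, of n] by simp

text \<open>A Motzkin path of length \<open>n\<close> lies in \<open>strip_walks P n 0\<close> iff its amplitude is at most
  \<open>P - 3\<close>; \<open>P\<close> is the period of the trigonometric formula for the number of these walks.\<close>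
definition strip_walks :: "nat \<Rightarrow> nat \<Rightarrow> int \<Rightarrow> step list set" where
  "strip_walks P n l = {p. length p = n \<and> (\<forall>k\<le>n. 0 \<le> level p k \<and> 2 * level p k + 3 \<le> int P)
     \<and> level p n = l \<and> (\<forall>k<n. p ! k = H \<longrightarrow> 2 * level p k + 4 \<le> int P)}"

lemma finite_strip_walks: "finite (strip_walks P n l)"
  by (rule finite_subset[OF _ finite_step_lists_length[of n]]) (auto simp: strip_walks_def)

lemma strip_walks_eq_empty: "l < 0 \<or> int P < 2 * l + 3 \<Longrightarrow> strip_walks P n l = {}"
  by (auto simp: strip_walks_def)

lemma strip_walks_0: "strip_walks P 0 l = (if l = 0 \<and> 3 \<le> int P then {[]} else {})"
  by (auto simp: strip_walks_def)

lemma snoc_in_strip_walks: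
  "q @ [s] \<in> strip_walks P (Suc n) l \<longleftrightarrow>
     q \<in> strip_walks P n (l - delta s) \<and> 0 \<le> l \<and> 2 * l + 3 \<le> int P \<and>
     (s = H \<longrightarrow> 2 * l + 4 \<le> int P)"
proof (cases "length q = n")
  case True
  have level_snoc: "level (q @ [s]) k = (if k \<le> n then level q k else level q n + delta s)"
    if "k \<le> Suc n" for k
    using True that level_snoc_length[of q s] by (auto simp: level_append le_Suc_eq)
  have nth_snoc: "(q @ [s]) ! k = (if k < n then q ! k else s)" if "k < Suc n" for k
    using True that by (simp add: nth_append)
  show ?thesis
    unfolding strip_walks_def using True
    by (auto simp: level_snoc nth_snoc level_append le_Suc_eq less_Suc_eq all_conj_distrib delta_def)
next
  case False
  then show ?thesis by (simp add: strip_walks_def)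
qed

lemma strip_walks_Suc:
  assumes "0 \<le> l" "2 * l + 3 \<le> int P"
  shows "strip_walks P (Suc n) l =
           (\<lambda>q. q @ [U]) ` strip_walks P n (l - 1) \<union> (\<lambda>q. q @ [D]) ` strip_walks P n (l + 1)
           \<union> (if 2 * l + 4 \<le> int P then (\<lambda>q. q @ [H]) ` strip_walks P n l else {})"
    (is "_ = ?R")
proof (intro equalityI subsetI)
  fix p assume p: "p \<in> strip_walks P (Suc n) l"
  then have "p \<noteq> []" by (auto simp: strip_walks_def)
  then obtain q s where "p = q @ [s]" by (metis rev_exhaust)
  with p show "p \<in> ?R" by (cases s) (auto simp: snoc_in_strip_walks delta_def)
next
  fix p assume "p \<in> ?R"
  with assms show "p \<in> strip_walks P (Suc n) l"
    by (auto simp: snoc_in_strip_walks delta_def split: if_splits)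
qed

lemma card_strip_walks_Suc:
  assumes "0 \<le> l" "2 * l + 3 \<le> int P"
  shows "card (strip_walks P (Suc n) l) = card (strip_walks P n (l - 1)) + card (strip_walks P n (l + 1))
           + (if 2 * l + 4 \<le> int P then card (strip_walks P n l) else 0)"
proof -
  have card_snoc: "card ((\<lambda>q. q @ [s]) ` A) = card A" for s and A :: "step list set"
    by (rule card_image) (simp add: inj_on_def)
  show ?thesis
    unfolding strip_walks_Suc[OF assms]
    by (subst card_Un_disjoint; auto simp: finite_strip_walks card_snoc)+
qed

section \<open>Counting walks in a strip by a trigonometric sum\<close>

text \<open>The eigenvalues of the transfer matrix of the strip are \<open>1 + 2 cos (2 \<pi> j / P)\<close>, with
  eigenvectors \<open>l \<mapsto> sin ((l + 1) 2 \<pi> j / P)\<close>.\<close>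
definition strip_angle :: "nat \<Rightarrow> nat \<Rightarrow> real" where
  "strip_angle P j = 2 * pi * real j / real P"

definition strip_count :: "nat \<Rightarrow> nat \<Rightarrow> int \<Rightarrow> real" where
  "strip_count P n l = 2 / real P * (\<Sum>j<P. (1 + 2 * cos (strip_angle P j)) ^ n
      * sin (strip_angle P j) * sin (of_int (l + 1) * strip_angle P j))"

lemma sum_cos_strip_angle:
  assumes P: "P > 0"
  shows "(\<Sum>j<P. cos (real k * strip_angle P j)) = (if P dvd k then real P else 0)"
proof (cases "P dvd k")
  case True
  then obtain m where k: "k = P * m" by auto
  have "cos (real k * strip_angle P j) = 1" for j
  proof -
    have "real k * strip_angle P j = 2 * real (m * j) * pi"
      using P by (simp add: k strip_angle_def field_simps)
    then show ?thesis by (simp only: cos_2npi)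
  qed
  then show ?thesis using True by simp
next
  case False
  define z where "z = cis (2 * pi * real k / real P)"
  have "z \<noteq> 1"
  proof
    assume "z = 1"
    then obtain m :: int where "2 * pi * real k / real P = m * 2 * pi"
      by (auto simp: z_def complex_eq_iff cos_one_2pi_int)
    then have "real k = of_int m * real P" using P by (simp add: field_simps)
    then have "int k = m * int P" by (metis of_int_eq_iff of_int_mult of_int_of_nat_eq)
    then show False using False by (metis dvd_triv_right int_dvd_int_iff)
  qed
  moreover have "z ^ P = 1"
  proof -
    have "z ^ P = cis (real P * (2 * pi * real k / real P))"
      unfolding z_def by (rule DeMoivre)
    also have "\<dots> = cis (2 * pi * real k)" using P by simp
    finally show ?thesis by (simp add: cis_multiple_2pi)
  qed
  ultimately have "Re (\<Sum>j<P. z ^ j) = 0" by (simp add: geometric_sum)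
  moreover have "Re (z ^ j) = cos (real k * strip_angle P j)" for j
    by (simp add: z_def DeMoivre strip_angle_def field_simps)
  ultimately show ?thesis using False by simp
qed

lemma strip_count_Suc: "strip_count P (Suc n) l = strip_count P n (l - 1) + strip_count P n l + strip_count P n (l + 1)"
proof -
  have "(1 + 2 * cos a) ^ Suc n * sin a * sin (of_int (l + 1) * a) =
      (1 + 2 * cos a) ^ n * sin a * sin (of_int (l - 1 + 1) * a) +
      (1 + 2 * cos a) ^ n * sin a * sin (of_int (l + 1) * a) +
      (1 + 2 * cos a) ^ n * sin a * sin (of_int (l + 1 + 1) * a)" for a :: real
  proof -
    define x where "x = of_int (l + 1) * a"
    have e1: "of_int (l - 1 + 1) * a = x - a" and e2: "of_int (l + 1 + 1) * a = x + a"
      by (simp_all add: x_def algebra_simps)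
    show ?thesis unfolding e1 e2 x_def[symmetric] by (simp add: sin_add sin_diff algebra_simps)
  qed
  then show ?thesis
    by (simp add: strip_count_def sum.distrib distrib_left)
qed

lemma strip_count_minus_1: "strip_count P n (-1) = 0"
  by (simp add: strip_count_def)

lemma strip_count_0:
  assumes "0 \<le> l" "2 * l + 3 \<le> int P"
  shows "strip_count P 0 l = (if l = 0 then 1 else 0)"
proof -
  obtain k where k: "l = int k" using assms(1) by (metis nonneg_eq_int)
  have P: "P > 0" using assms by linarith
  have sin_sin: "sin (strip_angle P j) * sin ((of_int l + 1) * strip_angle P j) =
      (cos (real k * strip_angle P j) - cos (real (k + 2) * strip_angle P j)) / 2" for j
    by (simp add: sin_times_sin k algebra_simps)
  have "strip_count P 0 l =
      2 / real P * (\<Sum>j<P. (cos (real k * strip_angle P j) - cos (real (k + 2) * strip_angle P j)) / 2)"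
    by (simp add: strip_count_def sin_sin)
  also have "\<dots> =
      2 / real P * ((\<Sum>j<P. cos (real k * strip_angle P j)) - (\<Sum>j<P. cos (real (k + 2) * strip_angle P j))) / 2"
    by (simp add: sum_subtractf sum_divide_distrib[symmetric])
  also have "\<dots> = 2 / real P * ((if P dvd k then real P else 0) - (if P dvd (k + 2) then real P else 0)) / 2"
    by (simp only: sum_cos_strip_angle[OF P])
  also have "\<dots> = (if l = 0 then 1 else 0)"
  proof -
    have "\<not> P dvd (k + 2)" "P dvd k \<longleftrightarrow> k = 0" using assms k by (auto dest: dvd_imp_le)
    then show ?thesis using P k by auto
  qed
  finally show ?thesis .
qed

text \<open>At the top of the strip the recursion for \<open>strip_count\<close> must lose the term from level
  \<open>l + 1\<close> (if \<open>P\<close> is even) or the horizontal term (if \<open>P\<close> is odd); this is where the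
  sine at level \<open>l + 1\<close> vanishes, respectively is the negative of the sine at level \<open>l\<close>.\<close>
lemma strip_count_top_even:
  assumes "int P = 2 * l + 4" "0 \<le> l"
  shows "strip_count P n (l + 1) = 0"
proof -
  have "of_int (l + 1 + 1) * strip_angle P j = real j * pi" for j
  proof -
    have "real P = 2 * of_int l + 4" using assms(1) by (metis of_int_numeral of_int_add of_int_mult of_int_of_nat_eq)
    with assms(2) show ?thesis by (simp add: strip_angle_def field_simps)
  qed
  then show ?thesis by (simp add: strip_count_def)
qed

lemma strip_count_top_odd:
  assumes "int P = 2 * l + 3" "0 \<le> l"
  shows "strip_count P n l + strip_count P n (l + 1) = 0"
proof -
  have "sin (of_int (l + 1) * strip_angle P j) + sin (of_int (l + 1 + 1) * strip_angle P j) = 0" for j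
  proof -
    have "real P = 2 * of_int l + 3" using assms(1) by (metis of_int_numeral of_int_add of_int_mult of_int_of_nat_eq)
    have "(of_int (l + 1) * strip_angle P j + of_int (l + 1 + 1) * strip_angle P j) / 2
        = (2 * of_int l + 3) * (2 * pi * real j / real P) / 2"
      by (simp add: strip_angle_def algebra_simps add_divide_distrib[symmetric])
    also have "\<dots> = real j * pi" using \<open>real P = 2 * of_int l + 3\<close> assms(2) by simp
    finally have "(of_int (l + 1) * strip_angle P j + of_int (l + 1 + 1) * strip_angle P j) / 2 = real j * pi" .
    then show ?thesis by (simp add: sin_plus_sin)
  qed
  note sines_cancel = this
  define g where "g j = (1 + 2 * cos (strip_angle P j)) ^ n * sin (strip_angle P j)" for j
  have "(\<Sum>j<P. g j * sin (of_int (l + 1) * strip_angle P j)) + (\<Sum>j<P. g j * sin (of_int (l + 1 + 1) * strip_angle P j))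
      = (\<Sum>j<P. g j * (sin (of_int (l + 1) * strip_angle P j) + sin (of_int (l + 1 + 1) * strip_angle P j)))"
    by (simp only: sum.distrib[symmetric] distrib_left)
  also have "\<dots> = 0" by (simp only: sines_cancel mult_zero_right sum.neutral_const)
  finally show ?thesis
    unfolding strip_count_def g_def[symmetric] by (simp only: distrib_left[symmetric] mult_zero_right)
qed

lemma card_strip_walks:
  "0 \<le> l \<Longrightarrow> 2 * l + 3 \<le> int P \<Longrightarrow> real (card (strip_walks P n l)) = strip_count P n l"
proof (induction n arbitrary: l)
  case 0
  then show ?case by (simp add: strip_walks_0 strip_count_0)
next
  case (Suc n)
  have below: "real (card (strip_walks P n (l - 1))) = strip_count P n (l - 1)"
    using Suc by (cases "l = 0") (simp_all add: strip_walks_eq_empty strip_count_minus_1)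
  have "2 * (l + 1) + 3 \<le> int P \<or> int P = 2 * l + 4 \<or> int P = 2 * l + 3"
    using Suc.prems by arith
  then consider "2 * (l + 1) + 3 \<le> int P" | "int P = 2 * l + 4" | "int P = 2 * l + 3"
    by blast
  then show ?case
  proof cases
    case 1
    then show ?thesis using Suc below by (simp add: card_strip_walks_Suc strip_count_Suc)
  next
    case 2
    then show ?thesis using Suc below strip_count_top_even[OF 2]
      by (simp add: card_strip_walks_Suc strip_count_Suc strip_walks_eq_empty)
  next
    case 3
    then show ?thesis using Suc below strip_count_top_odd[OF 3, of n]
      by (simp add: card_strip_walks_Suc strip_count_Suc strip_walks_eq_empty)
  qed
qed

section \<open>Amplitude\<close>

lemma level_le_height: "k \<le> length p \<Longrightarrow> level p k \<le> height p"
  unfolding height_def by (rule Max_ge) auto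

lemma height_attained: "\<exists>k\<le>length p. level p k = height p"
proof -
  have "height p \<in> level p ` {0..length p}"
    unfolding height_def by (rule Max_in) auto
  then show ?thesis by auto
qed

lemma height_nonneg: "0 \<le> height p"
  using level_le_height[of 0 p] by simp

lemma height_le_length: "height p \<le> int (length p)"
  using height_attained[of p] level_le by (metis of_nat_mono order_trans)

definition amplitude :: "step list \<Rightarrow> int" where
  "amplitude p = 2 * height p + (if has_hstep_on p (height p) then 1 else 0)"

lemma finite_motzkin_paths: "finite (motzkin_paths n)"
  by (rule finite_subset[OF _ finite_step_lists_length[of n]]) (auto simp: motzkin_paths_def)

lemma amplitude_bounds: "p \<in> motzkin_paths n \<Longrightarrow> 0 \<le> amplitude p \<and> amplitude p \<le> 2 * int n + 1"
  using height_le_length[of p] height_nonneg[of p] by (auto simp: amplitude_def motzkin_paths_def)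

lemma strip_walks_0_eq: "strip_walks P n 0 = {p \<in> motzkin_paths n. amplitude p + 3 \<le> int P}"
proof (intro equalityI subsetI)
  fix p assume "p \<in> strip_walks P n 0"
  then have len: "length p = n" and strip: "\<forall>k\<le>n. 0 \<le> level p k \<and> 2 * level p k + 3 \<le> int P"
    and "level p n = 0" and hsteps: "\<forall>k<n. p ! k = H \<longrightarrow> 2 * level p k + 4 \<le> int P"
    by (auto simp: strip_walks_def)
  then have "p \<in> motzkin_paths n" by (auto simp: motzkin_paths_def motzkin_def)
  moreover have "2 * height p + 3 \<le> int P"
    using height_attained[of p] strip len by auto
  moreover have "2 * height p + 4 \<le> int P" if "has_hstep_on p (height p)"
    using that hsteps len by (auto simp: has_hstep_on_def)
  ultimately show "p \<in> {p \<in> motzkin_paths n. amplitude p + 3 \<le> int P}"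
    by (auto simp: amplitude_def)
next
  fix p assume "p \<in> {p \<in> motzkin_paths n. amplitude p + 3 \<le> int P}"
  then have len: "length p = n" and "motzkin p" and amp: "amplitude p + 3 \<le> int P"
    by (auto simp: motzkin_paths_def)
  have "2 * level p k + 3 \<le> int P" if "k \<le> n" for k
    using level_le_height[of k p] that len amp by (simp add: amplitude_def split: if_splits)
  moreover have "2 * level p k + 4 \<le> int P" if "k < n" "p ! k = H" for k
  proof (cases "level p k = height p")
    case True
    then have "has_hstep_on p (height p)" using that len by (auto simp: has_hstep_on_def)
    then show ?thesis using amp True by (simp add: amplitude_def)
  next
    case False
    then show ?thesis using level_le_height[of k p] that len amp by (simp add: amplitude_def split: if_splits)
  qed
  ultimately show "p \<in> strip_walks P n 0"
    using len \<open>motzkin p\<close> by (simp add: strip_walks_def motzkin_def)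
qed

definition amp_count :: "nat \<Rightarrow> nat \<Rightarrow> nat" where
  "amp_count n P = card {p \<in> motzkin_paths n. amplitude p + 3 \<le> int P}"

lemma amp_count_eq_card_strip_walks: "amp_count n P = card (strip_walks P n 0)"
  by (simp add: amp_count_def strip_walks_0_eq)

lemma amp_count_eq_M: "2 * n + 4 \<le> P \<Longrightarrow> amp_count n P = M n"
proof -
  assume "2 * n + 4 \<le> P"
  then have "{p \<in> motzkin_paths n. amplitude p + 3 \<le> int P} = motzkin_paths n"
    using amplitude_bounds[of _ n] by force
  then show ?thesis by (simp add: amp_count_def M_def)
qed

lemma card_amplitude_eq:
  "real (card {p \<in> motzkin_paths n. amplitude p = int m}) = real (amp_count n (m + 3)) - real (amp_count n (m + 2))"
proof -
  have "{p \<in> motzkin_paths n. amplitude p + 3 \<le> int (m + 3)} =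
      {p \<in> motzkin_paths n. amplitude p + 3 \<le> int (m + 2)} \<union> {p \<in> motzkin_paths n. amplitude p = int m}"
    by auto
  then have "amp_count n (m + 3) = amp_count n (m + 2) + card {p \<in> motzkin_paths n. amplitude p = int m}"
    unfolding amp_count_def by (simp add: card_Un_disjoint disjoint_iff finite_motzkin_paths)
  then show ?thesis by simp
qed

lemma card_hstep_on_height:
  "card {p \<in> motzkin_paths n. has_hstep_on p (height p) = c} =
     (\<Sum>i\<le>n. card {p \<in> motzkin_paths n. amplitude p = 2 * int i + of_bool c})"
proof -
  have "{p \<in> motzkin_paths n. has_hstep_on p (height p) = c} =
      (\<Union>i\<le>n. {p \<in> motzkin_paths n. amplitude p = 2 * int i + of_bool c})"
  proof (intro equalityI subsetI)
    fix p assume p: "p \<in> {p \<in> motzkin_paths n. has_hstep_on p (height p) = c}"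
    then have "amplitude p = 2 * int (nat (height p)) + of_bool c" "nat (height p) \<le> n"
      using height_nonneg[of p] height_le_length[of p] by (auto simp: amplitude_def motzkin_paths_def)
    with p show "p \<in> (\<Union>i\<le>n. {p \<in> motzkin_paths n. amplitude p = 2 * int i + of_bool c})"
      by (intro UN_I[of "nat (height p)"]) auto
  next
    fix p assume "p \<in> (\<Union>i\<le>n. {p \<in> motzkin_paths n. amplitude p = 2 * int i + of_bool c})"
    then show "p \<in> {p \<in> motzkin_paths n. has_hstep_on p (height p) = c}"
      by (auto simp: amplitude_def of_bool_def split: if_splits) presburger+
  qed
  then show ?thesis
    by (simp only:) (rule card_UN_disjoint, auto simp: finite_motzkin_paths)
qed

lemma twice_b_minus_M:
  "2 * real (b n) - real (M n) =
     (\<Sum>i\<le>n. 2 * real (amp_count n (2 * i + 3)) - real (amp_count n (2 * i + 2)) - real (amp_count n (2 * i + 4)))"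
proof -
  have "M n = b n + card {p \<in> motzkin_paths n. has_hstep_on p (height p) = True}"
    unfolding M_def b_def by (subst card_Un_disjoint[symmetric]) (auto simp: finite_motzkin_paths intro: arg_cong[where f = card])
  moreover have "b n = card {p \<in> motzkin_paths n. has_hstep_on p (height p) = False}"
    by (simp add: b_def)
  ultimately have "2 * real (b n) - real (M n) =
      (\<Sum>i\<le>n. real (card {p \<in> motzkin_paths n. amplitude p = 2 * int i})
        - real (card {p \<in> motzkin_paths n. amplitude p = 2 * int i + 1}))"
    unfolding card_hstep_on_height by (simp add: sum_subtractf)
  also have "\<dots> = (\<Sum>i\<le>n. 2 * real (amp_count n (2 * i + 3)) - real (amp_count n (2 * i + 2))
      - real (amp_count n (2 * i + 4)))"
  proof (rule sum.cong[OF refl])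
    fix i
    show "real (card {p \<in> motzkin_paths n. amplitude p = 2 * int i})
        - real (card {p \<in> motzkin_paths n. amplitude p = 2 * int i + 1}) =
      2 * real (amp_count n (2 * i + 3)) - real (amp_count n (2 * i + 2)) - real (amp_count n (2 * i + 4))"
      using card_amplitude_eq[of n "2 * i"] card_amplitude_eq[of n "2 * i + 1"]
      by (simp add: numeral_eq_Suc algebra_simps)
  qed
  finally show ?thesis .
qed

section \<open>The count as a trigonometric sum\<close>

text \<open>\<open>step_char\<close> is the characteristic function of a uniformly random step in \<open>{-1, 0, 1}\<close>.\<close>
definition step_char :: "real \<Rightarrow> real" where
  "step_char t = (1 + 2 * cos t) / 3"

definition phi :: "nat \<Rightarrow> real \<Rightarrow> real" where
  "phi n t = sin t ^ 2 * step_char t ^ n"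

definition trig_sum :: "nat \<Rightarrow> nat \<Rightarrow> real" where
  "trig_sum n P = 4 / real P * (\<Sum>j = 1..P div 2. phi n (strip_angle P j))"

lemma sum_lessThan_symmetric:
  fixes f :: "nat \<Rightarrow> 'a :: comm_monoid_add"
  assumes "P > 0" and "f 0 = 0" and "\<And>i. i \<le> P \<Longrightarrow> f (P - i) = f i"
    and "even P \<Longrightarrow> f (P div 2) = 0"
  shows "(\<Sum>j<P. f j) = (\<Sum>j = 1..P div 2. f j) + (\<Sum>j = 1..P div 2. f j)"
proof -
  have split: "{..<P} = {0} \<union> ({1..P div 2} \<union> {P div 2 + 1..<P})" using assms(1) by auto
  have "(\<Sum>j<P. f j) = f 0 + ((\<Sum>j = 1..P div 2. f j) + (\<Sum>j = P div 2 + 1..<P. f j))"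
    unfolding split using assms(1) by (subst sum.union_disjoint, auto)+
  also have "(\<Sum>j = P div 2 + 1..<P. f j) = (\<Sum>i = 1..<P - P div 2. f i)"
    by (rule sum.reindex_bij_witness[of _ "\<lambda>i. P - i" "\<lambda>j. P - j"]) (use assms(3) in auto)
  also have "\<dots> = (\<Sum>j = 1..P div 2. f j)"
  proof (rule sum.mono_neutral_left)
    show "\<forall>i\<in>{1..P div 2} - {1..<P - P div 2}. f i = 0"
    proof
      fix i assume "i \<in> {1..P div 2} - {1..<P - P div 2}"
      then have "even P" "i = P div 2" by auto presburger+
      then show "f i = 0" using assms(4) by simp
    qed
  qed auto
  finally show ?thesis using assms(2) by simp
qed

lemma strip_count_level_0:
  assumes "P > 0"
  shows "strip_count P n 0 = 3 ^ n * trig_sum n P"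
proof -
  define f where "f j = phi n (strip_angle P j)" for j
  have summand: "(1 + 2 * cos (strip_angle P j)) ^ n * sin (strip_angle P j) * sin (of_int (0 + 1) * strip_angle P j)
      = 3 ^ n * f j" for j
    by (simp add: f_def phi_def step_char_def power2_eq_square power_divide)
  have "f (P - i) = f i" if "i \<le> P" for i
  proof -
    have "strip_angle P (P - i) = 2 * pi - strip_angle P i"
      using that assms by (simp add: strip_angle_def of_nat_diff field_simps)
    then show ?thesis by (simp add: f_def phi_def step_char_def)
  qed
  moreover have "f (P div 2) = 0" if "even P"
  proof -
    have "strip_angle P (P div 2) = pi" using that assms by (auto simp: strip_angle_def elim!: evenE)
    then show ?thesis by (simp add: f_def phi_def)
  qed
  ultimately have "(\<Sum>j<P. f j) = 2 * (\<Sum>j = 1..P div 2. f j)"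
    using sum_lessThan_symmetric[OF assms, of f] by (simp add: f_def phi_def strip_angle_def)
  then show ?thesis
    unfolding strip_count_def summand by (simp add: trig_sum_def f_def sum_distrib_left[symmetric])
qed

lemma amp_count_eq_trig_sum:
  assumes "P \<ge> 2"
  shows "real (amp_count n P) = 3 ^ n * trig_sum n P"
proof (cases "P = 2")
  case True
  then show ?thesis
    by (simp add: amp_count_eq_card_strip_walks strip_walks_eq_empty trig_sum_def phi_def strip_angle_def)
next
  case False
  then show ?thesis using assms card_strip_walks[of 0 P n] strip_count_level_0[of P n]
    by (simp add: amp_count_eq_card_strip_walks)
qed

section \<open>Analytic estimates\<close>

lemma has_derivative_inverse_scaling:
  fixes g g' :: "real \<Rightarrow> real"
  assumes "\<And>t. (g has_real_derivative g' t) (at t)" and "x \<noteq> 0"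
  shows "((\<lambda>x. g (u / x) / x) has_real_derivative - (g (u / x) + u / x * g' (u / x)) / x\<^sup>2) (at x)"
proof -
  have "((\<lambda>x. g (u / x)) has_real_derivative g' (u / x) * (- u / x\<^sup>2)) (at x)"
    by (rule DERIV_chain2[OF assms(1)]) (use assms(2) in \<open>auto intro!: derivative_eq_intros simp: power2_eq_square\<close>)
  then show ?thesis
    using assms(2) by (auto intro!: derivative_eq_intros simp: field_simps power2_eq_square)
qed

lemma has_second_derivative_inverse_scaling:
  fixes g g' g'' :: "real \<Rightarrow> real"
  assumes "\<And>t. (g has_real_derivative g' t) (at t)" "\<And>t. (g' has_real_derivative g'' t) (at t)"
    and "x \<noteq> 0"
  shows "((\<lambda>x. - (g (u / x) + u / x * g' (u / x)) / x\<^sup>2) has_real_derivative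
           (2 * g (u / x) + 4 * (u / x) * g' (u / x) + (u / x)\<^sup>2 * g'' (u / x)) / x ^ 3) (at x)"
proof -
  have "((\<lambda>x. g (u / x)) has_real_derivative g' (u / x) * (- u / x\<^sup>2)) (at x)"
    "((\<lambda>x. g' (u / x)) has_real_derivative g'' (u / x) * (- u / x\<^sup>2)) (at x)"
    by (rule DERIV_chain2[OF assms(1)] DERIV_chain2[OF assms(2)];
        use assms(3) in \<open>auto intro!: derivative_eq_intros simp: power2_eq_square\<close>)+
  then show ?thesis
    using assms(3) by (auto intro!: derivative_eq_intros simp: field_simps power2_eq_square power3_eq_cube)
qed

text \<open>The truncated exponents \<open>n - 1\<close>, \<open>n - 2\<close> are harmless: they only occur with the factors
  \<open>n\<close>, \<open>n (n - 1)\<close>, which vanish when the truncation bites.\<close>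
definition phi' :: "nat \<Rightarrow> real \<Rightarrow> real" where
  "phi' n t = 2 * sin t * cos t * step_char t ^ n - 2 * real n / 3 * sin t ^ 3 * step_char t ^ (n - 1)"

definition phi'' :: "nat \<Rightarrow> real \<Rightarrow> real" where
  "phi'' n t = 2 * (cos t ^ 2 - sin t ^ 2) * step_char t ^ n
     - 10 * real n / 3 * sin t ^ 2 * cos t * step_char t ^ (n - 1)
     + 4 * real n * real (n - 1) / 9 * sin t ^ 4 * step_char t ^ (n - 2)"

lemma phi_has_derivative: "(phi n has_real_derivative phi' n t) (at t)"
  unfolding phi_def[abs_def] phi'_def step_char_def
  by (auto intro!: derivative_eq_intros simp: algebra_simps power2_eq_square power3_eq_cube)

lemma phi'_has_derivative: "(phi' n has_real_derivative phi'' n t) (at t)"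
  unfolding phi'_def[abs_def] phi''_def step_char_def
  by (auto intro!: derivative_eq_intros simp: algebra_simps power2_eq_square power3_eq_cube eval_nat_numeral)
    (simp add: field_simps)

lemma abs_monomial_le:
  fixes S C c X t k :: real
  assumes "\<bar>S\<bar> \<le> t" "\<bar>C\<bar> \<le> 1" "\<bar>c\<bar> \<le> 1" "0 \<le> X"
  shows "\<bar>k * S ^ p * C ^ q * c ^ r * X\<bar> \<le> \<bar>k\<bar> * t ^ p * X"
proof -
  have "\<bar>k * S ^ p * C ^ q * c ^ r * X\<bar> = \<bar>k\<bar> * \<bar>S\<bar> ^ p * (\<bar>C\<bar> ^ q * \<bar>c\<bar> ^ r) * X"
    using assms(4) by (simp add: abs_mult power_abs mult.assoc)
  also have "\<dots> \<le> \<bar>k\<bar> * t ^ p * 1 * X"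
    using assms by (intro mult_right_mono mult_mono mult_left_mono power_mono mult_le_one power_le_one) auto
  finally show ?thesis by simp
qed

lemma phi_combination_bound:
  assumes n: "2 \<le> n" and t: "0 \<le> t" "t \<le> pi / 2"
  shows "\<bar>2 * phi n t + 4 * t * phi' n t + t\<^sup>2 * phi'' n t\<bar>
           \<le> 12 * (t\<^sup>2 + real n * t ^ 4 + real n ^ 2 * t ^ 6) * step_char t ^ (n - 2)"
proof -
  obtain m where m: "n = m + 2" using n by (metis add.commute le_Suc_ex)
  define S C c X where "S = sin t" and "C = cos t" and "c = step_char t" and "X = c ^ m"
  have "0 \<le> C" unfolding C_def using t by (intro cos_ge_zero) auto
  then have c: "\<bar>c\<bar> \<le> 1" and X: "0 \<le> X"
    by (auto simp: c_def X_def C_def step_char_def)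
  note mono = abs_monomial_le[OF _ _ c X, of S t C]
  have S: "\<bar>S\<bar> \<le> t" unfolding S_def using abs_sin_x_le_abs_x[of t] t by simp
  have C: "\<bar>C\<bar> \<le> 1" unfolding C_def by simp
  have expand: "2 * phi n t + 4 * t * phi' n t + t\<^sup>2 * phi'' n t =
      2 * S ^ 2 * C ^ 0 * c ^ 2 * X + (8 * t) * S ^ 1 * C ^ 1 * c ^ 2 * X
      + (- 8 * real n * t / 3) * S ^ 3 * C ^ 0 * c ^ 1 * X + (2 * t\<^sup>2) * S ^ 0 * C ^ 2 * c ^ 2 * X
      + (- 2 * t\<^sup>2) * S ^ 2 * C ^ 0 * c ^ 2 * X + (- 10 * real n * t\<^sup>2 / 3) * S ^ 2 * C ^ 1 * c ^ 1 * X
      + (4 * real n * real (n - 1) * t\<^sup>2 / 9) * S ^ 4 * C ^ 0 * c ^ 0 * X"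
    by (simp add: m phi_def phi'_def phi''_def S_def C_def c_def X_def power_add power2_eq_square field_simps)
  have "\<bar>2 * phi n t + 4 * t * phi' n t + t\<^sup>2 * phi'' n t\<bar> \<le> \<bar>2 * S ^ 2 * C ^ 0 * c ^ 2 * X\<bar> + \<bar>(8 * t) * S ^ 1 * C ^ 1 * c ^ 2 * X\<bar>
      + \<bar>(- 8 * real n * t / 3) * S ^ 3 * C ^ 0 * c ^ 1 * X\<bar> + \<bar>(2 * t\<^sup>2) * S ^ 0 * C ^ 2 * c ^ 2 * X\<bar>
      + \<bar>(- 2 * t\<^sup>2) * S ^ 2 * C ^ 0 * c ^ 2 * X\<bar> + \<bar>(- 10 * real n * t\<^sup>2 / 3) * S ^ 2 * C ^ 1 * c ^ 1 * X\<bar>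
      + \<bar>(4 * real n * real (n - 1) * t\<^sup>2 / 9) * S ^ 4 * C ^ 0 * c ^ 0 * X\<bar>"
    unfolding expand by (intro order_trans[OF abs_triangle_ineq] add_mono order_refl)
  also have "\<dots> \<le> \<bar>2\<bar> * t ^ 2 * X + \<bar>8 * t\<bar> * t ^ 1 * X + \<bar>- 8 * real n * t / 3\<bar> * t ^ 3 * X
      + \<bar>2 * t\<^sup>2\<bar> * t ^ 0 * X + \<bar>- 2 * t\<^sup>2\<bar> * t ^ 2 * X + \<bar>- 10 * real n * t\<^sup>2 / 3\<bar> * t ^ 2 * X
      + \<bar>4 * real n * real (n - 1) * t\<^sup>2 / 9\<bar> * t ^ 4 * X"
    by (intro add_mono mono[OF S C])
  also have "\<dots> = 12 * t\<^sup>2 * X + (6 * real n + 2) * t ^ 4 * X + 4 * real n * real (n - 1) * t\<^sup>2 / 9 * t ^ 4 * X"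
    using t by (simp add: abs_mult algebra_simps eval_nat_numeral)
  also have "\<dots> \<le> 12 * (t\<^sup>2 + real n * t ^ 4 + real n ^ 2 * t ^ 6) * X"
  proof -
    have "real n * real (n - 1) \<le> real n * real n" by (intro mult_left_mono) auto
    moreover have "0 \<le> real n * real n" by simp
    ultimately have "4 * real n * real (n - 1) / 9 \<le> 12 * real n ^ 2"
      unfolding power2_eq_square by linarith
    then have "4 * real n * real (n - 1) / 9 * (t ^ 6 * X) \<le> 12 * real n ^ 2 * (t ^ 6 * X)"
      using X by (intro mult_right_mono) auto
    moreover have "(6 * real n + 2) * t ^ 4 * X \<le> 12 * real n * t ^ 4 * X"
      using n X by (intro mult_right_mono) auto
    ultimately show ?thesis by (simp add: algebra_simps eval_nat_numeral)
  qed
  finally show ?thesis by (simp add: m X_def c_def)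
qed

lemma cos_ge_quadratic: "0 \<le> (x::real) \<Longrightarrow> 1 - x\<^sup>2 / 2 \<le> cos x"
  using DERIV_nonneg_imp_nondecreasing[of 0 x "\<lambda>t. cos t - 1 + t\<^sup>2 / 2"] sin_x_le_x
  by (force intro!: derivative_eq_intros simp: power2_eq_square)

lemma sin_ge_cubic: "0 \<le> (x::real) \<Longrightarrow> x - x ^ 3 / 6 \<le> sin x"
  using DERIV_nonneg_imp_nondecreasing[of 0 x "\<lambda>t. sin t - t + t ^ 3 / 6"] cos_ge_quadratic
  by (force intro!: derivative_eq_intros simp: power2_eq_square)

lemma cos_le_quartic: "0 \<le> (x::real) \<Longrightarrow> cos x \<le> 1 - x\<^sup>2 / 2 + x ^ 4 / 24"
  using DERIV_nonneg_imp_nondecreasing[of 0 x "\<lambda>t. 1 - t\<^sup>2 / 2 + t ^ 4 / 24 - cos t"] sin_ge_cubic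
  by (force intro!: derivative_eq_intros simp: power2_eq_square)

lemma step_char_le_exp:
  assumes "0 \<le> t" "t \<le> pi / 2"
  shows "step_char t \<le> exp (- t\<^sup>2 / 6)"
proof -
  have "t\<^sup>2 \<le> 2\<^sup>2" using assms pi_less_4 by (intro power_mono) auto
  then have "t\<^sup>2 * t\<^sup>2 \<le> 4 * t\<^sup>2" by (intro mult_right_mono) auto
  moreover have "t ^ 4 = t\<^sup>2 * t\<^sup>2" by (simp flip: power_add)
  moreover have "0 \<le> t\<^sup>2" by simp
  ultimately have "t ^ 4 \<le> 6 * t\<^sup>2" by linarith
  then have "step_char t \<le> 1 + - t\<^sup>2 / 6" using cos_le_quartic[OF assms(1)] by (simp add: step_char_def)
  also have "\<dots> \<le> exp (- t\<^sup>2 / 6)" by (rule exp_ge_add_one_self)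
  finally show ?thesis .
qed

lemma power_le_exp:
  fixes y c :: real
  assumes "0 \<le> y" "0 < c"
  shows "y ^ k \<le> (real k / c) ^ k * exp (c * y)"
proof (cases "k = 0")
  case False
  have "c * y / k \<le> exp (c * y / k)" using exp_ge_add_one_self[of "c * y / k"] by linarith
  then have "(c * y / k) ^ k \<le> exp (c * y / k) ^ k" using assms by (intro power_mono) auto
  also have "\<dots> = exp (c * y)" using False by (simp flip: exp_of_nat_mult)
  finally show ?thesis using assms False by (simp add: power_divide field_simps)
qed (use assms in simp)

definition poly_exp_const :: real where
  "poly_exp_const = 24 + 48 ^ 2 + 72 ^ 3"

lemma poly_mult_exp_le:
  fixes y :: real
  assumes "0 \<le> y"
  shows "(y + y\<^sup>2 + y ^ 3) * exp (- y / 12) \<le> poly_exp_const * exp (- y / 24)"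
proof -
  have "y ^ k \<le> real k ^ k * 24 ^ k * exp (y / 24)" for k
    using power_le_exp[OF assms, of "1 / 24" k] by simp
  from this[of 1] this[of 2] this[of 3]
  have "y + y\<^sup>2 + y ^ 3 \<le> poly_exp_const * exp (y / 24)" by (simp add: poly_exp_const_def algebra_simps)
  then have "(y + y\<^sup>2 + y ^ 3) * exp (- y / 12) \<le> poly_exp_const * exp (y / 24) * exp (- y / 12)"
    by (intro mult_right_mono) auto
  also have "\<dots> = poly_exp_const * (exp (y / 24) * exp (- y / 12))" by simp
  also have "exp (y / 24) * exp (- y / 12) = exp (- y / 24)" by (simp flip: exp_add)
  finally show ?thesis .
qed

lemma phi_combination_exp_bound:
  assumes n: "4 \<le> n" and t: "0 \<le> t" "t \<le> pi / 2"
  shows "\<bar>2 * phi n t + 4 * t * phi' n t + t\<^sup>2 * phi'' n t\<bar>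
           \<le> 12 * poly_exp_const / real n * exp (- real n * t\<^sup>2 / 24)"
proof -
  define y where "y = real n * t\<^sup>2"
  have y: "0 \<le> y" by (simp add: y_def)
  have "step_char t ^ (n - 2) \<le> exp (- t\<^sup>2 / 6) ^ (n - 2)"
    using step_char_le_exp[OF t] t cos_ge_zero[of t] by (intro power_mono) (auto simp: step_char_def)
  also have "\<dots> = exp (- real (n - 2) * t\<^sup>2 / 6)" by (simp flip: exp_of_nat_mult)
  also have "\<dots> \<le> exp (- y / 12)"
  proof -
    have "real n / 2 * t\<^sup>2 \<le> real (n - 2) * t\<^sup>2" using n by (intro mult_right_mono) auto
    then show ?thesis by (simp add: y_def)
  qed
  finally have decay: "step_char t ^ (n - 2) \<le> exp (- y / 12)" .
  have "\<bar>2 * phi n t + 4 * t * phi' n t + t\<^sup>2 * phi'' n t\<bar>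
      \<le> 12 * (t\<^sup>2 + real n * t ^ 4 + real n ^ 2 * t ^ 6) * step_char t ^ (n - 2)"
    using phi_combination_bound[of n t] n t by simp
  also have "\<dots> \<le> 12 * (t\<^sup>2 + real n * t ^ 4 + real n ^ 2 * t ^ 6) * exp (- y / 12)"
    using decay by (intro mult_left_mono) auto
  also have "\<dots> = 12 / real n * ((y + y\<^sup>2 + y ^ 3) * exp (- y / 12))"
    using n by (simp add: y_def field_simps eval_nat_numeral)
  also have "\<dots> \<le> 12 / real n * (poly_exp_const * exp (- y / 24))"
    using poly_mult_exp_le[OF y] by (intro mult_left_mono) auto
  finally show ?thesis by (simp add: y_def)
qed

lemma second_difference_le:
  fixes f f' f'' :: "real \<Rightarrow> real"
  assumes "\<And>x. a \<le> x \<Longrightarrow> x \<le> a + 2 \<Longrightarrow> (f has_real_derivative f' x) (at x)"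
    and "\<And>x. a \<le> x \<Longrightarrow> x \<le> a + 2 \<Longrightarrow> (f' has_real_derivative f'' x) (at x)"
    and "\<And>x. a \<le> x \<Longrightarrow> x \<le> a + 2 \<Longrightarrow> \<bar>f'' x\<bar> \<le> B"
  shows "\<bar>f a - 2 * f (a + 1) + f (a + 2)\<bar> \<le> B"
proof -
  define g where "g x = f (x + 1) - f x" for x
  have "\<exists>z. a < z \<and> z < a + 1 \<and> g (a + 1) - g a = (a + 1 - a) * (f' (z + 1) - f' z)"
  proof (rule MVT2)
    fix x assume "a \<le> x" "x \<le> a + 1"
    then show "(g has_real_derivative f' (x + 1) - f' x) (at x)"
      unfolding g_def using assms(1)[of "x + 1"] assms(1)[of x]
      by (auto intro!: derivative_eq_intros simp: DERIV_shift[symmetric])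
  qed simp
  then obtain z where z: "a < z" "z < a + 1" "g (a + 1) - g a = f' (z + 1) - f' z" by auto
  have "\<exists>w. z < w \<and> w < z + 1 \<and> f' (z + 1) - f' z = (z + 1 - z) * f'' w"
    by (rule MVT2) (use z in \<open>auto intro!: assms(2)\<close>)
  then obtain w where w: "z < w" "w < z + 1" "f' (z + 1) - f' z = f'' w" by auto
  have "f a - 2 * f (a + 1) + f (a + 2) = g (a + 1) - g a" by (simp add: g_def add.assoc)
  then show ?thesis using assms(3)[of w] z w by simp
qed

definition trig_term :: "nat \<Rightarrow> nat \<Rightarrow> real \<Rightarrow> real" where
  "trig_term n j x = 4 * (phi n (2 * pi * real j / x) / x)"

lemma trig_term_second_derivative_le:
  assumes n: "4 \<le> n" and j: "1 \<le> j" and x: "2 \<le> x" "4 * real j \<le> x" and y: "x \<le> y" "y \<le> x + 2"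
  defines "t \<equiv> 2 * pi * real j / y"
  shows "4 * \<bar>2 * phi n t + 4 * t * phi' n t + t\<^sup>2 * phi'' n t\<bar> / y ^ 3
           \<le> 48 * poly_exp_const / (real n * x ^ 3) * exp (- (real n * (2 * pi)\<^sup>2 / (24 * (x + 2)\<^sup>2)) * real j)"
proof -
  define u where "u = 2 * pi * real j"
  define a where "a = real n * (2 * pi)\<^sup>2 / (24 * (x + 2)\<^sup>2)"
  have u: "u > 0" using j by (simp add: u_def)
  have t: "0 \<le> t" "t \<le> pi / 2" "u / (x + 2) \<le> t"
  proof -
    show "0 \<le> t" using u y x by (simp add: t_def u_def)
    have "t \<le> u / x" unfolding t_def u_def[symmetric] using u x y by (intro divide_left_mono) auto
    also have "\<dots> \<le> pi / 2" using x by (simp add: u_def field_simps)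
    finally show "t \<le> pi / 2" .
    show "u / (x + 2) \<le> t" unfolding t_def u_def[symmetric] using u x y by (intro divide_left_mono) auto
  qed
  have "a * real j \<le> a * real j ^ 2" using j by (intro mult_left_mono) (auto simp: a_def power2_eq_square)
  also have "\<dots> = real n * (u / (x + 2))\<^sup>2 / 24" by (simp add: a_def u_def power_divide power_mult_distrib)
  also have "\<dots> \<le> real n * t\<^sup>2 / 24" using t u x by (intro divide_right_mono mult_left_mono power_mono) auto
  finally have "exp (- real n * t\<^sup>2 / 24) \<le> exp (- a * real j)" by simp
  from mult_left_mono[OF this, of "12 * poly_exp_const / real n"] phi_combination_exp_bound[OF n t(1,2)]
  have "4 * \<bar>2 * phi n t + 4 * t * phi' n t + t\<^sup>2 * phi'' n t\<bar> \<le> 48 * poly_exp_const / real n * exp (- a * real j)"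
    by (simp add: poly_exp_const_def)
  then have "4 * \<bar>2 * phi n t + 4 * t * phi' n t + t\<^sup>2 * phi'' n t\<bar> / y ^ 3
      \<le> 48 * poly_exp_const / real n * exp (- a * real j) / y ^ 3"
    by (rule divide_right_mono) (use x y in simp)
  also have "\<dots> \<le> 48 * poly_exp_const / real n * exp (- a * real j) / x ^ 3"
    using x y by (intro divide_left_mono power_mono mult_pos_pos) (auto simp: poly_exp_const_def)
  finally show ?thesis by (simp add: a_def)
qed

text \<open>Viewing \<open>trig_sum n P\<close> as a Riemann sum, its second difference in \<open>P\<close> is controlled termwise by
  the second derivative of \<open>trig_term n j\<close>, which for \<open>4 j \<le> P\<close> decays exponentially in \<open>j\<close>.\<close>
lemma trig_term_second_difference:
  assumes n: "4 \<le> n" and j: "1 \<le> j" and x: "2 \<le> x" "4 * real j \<le> x"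
  shows "\<bar>trig_term n j x - 2 * trig_term n j (x + 1) + trig_term n j (x + 2)\<bar>
     \<le> 48 * poly_exp_const / (real n * x ^ 3) * exp (- (real n * (2 * pi)\<^sup>2 / (24 * (x + 2)\<^sup>2)) * real j)"
proof -
  define u where "u = 2 * pi * real j"
  have trig_term_eq: "trig_term n j = (\<lambda>y. 4 * (phi n (u / y) / y))"
    by (simp add: fun_eq_iff trig_term_def u_def)
  show ?thesis
    unfolding trig_term_eq
  proof (rule second_difference_le)
    fix y assume y: "x \<le> y" "y \<le> x + 2"
    then have "y \<noteq> 0" using x by auto
    show "((\<lambda>y. 4 * (phi n (u / y) / y)) has_real_derivative
        4 * (- (phi n (u / y) + u / y * phi' n (u / y)) / y\<^sup>2)) (at y)"
      by (intro DERIV_cmult has_derivative_inverse_scaling phi_has_derivative \<open>y \<noteq> 0\<close>)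
    show "((\<lambda>y. 4 * (- (phi n (u / y) + u / y * phi' n (u / y)) / y\<^sup>2)) has_real_derivative
        4 * ((2 * phi n (u / y) + 4 * (u / y) * phi' n (u / y) + (u / y)\<^sup>2 * phi'' n (u / y)) / y ^ 3)) (at y)"
      by (intro DERIV_cmult has_second_derivative_inverse_scaling phi_has_derivative phi'_has_derivative
          \<open>y \<noteq> 0\<close>)
    show "\<bar>4 * ((2 * phi n (u / y) + 4 * (u / y) * phi' n (u / y) + (u / y)\<^sup>2 * phi'' n (u / y)) / y ^ 3)\<bar>
        \<le> 48 * poly_exp_const / (real n * x ^ 3) * exp (- (real n * (2 * pi)\<^sup>2 / (24 * (x + 2)\<^sup>2)) * real j)"
      using trig_term_second_derivative_le[OF n j x y] x y
      by (subst abs_mult) (simp add: abs_divide u_def)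
  qed
qed

section \<open>Second differences of the trigonometric sum\<close>

lemma trig_sum_eq_sum_trig_term: "trig_sum n Q = (\<Sum>j = 1..Q div 2. trig_term n j (real Q))"
  by (simp add: trig_sum_def trig_term_def strip_angle_def sum_distrib_left)

lemma sum_exp_neg_le:
  fixes a :: real
  assumes "a > 0"
  shows "(\<Sum>j = 1..N. exp (- a * real j)) \<le> 1 / a"
proof -
  define r where "r = exp (- a)"
  have r: "0 < r" "r < 1" using assms by (auto simp: r_def)
  have "(\<Sum>j = 1..N. exp (- a * real j)) = (\<Sum>j<N. r ^ Suc j)"
    by (rule sum.reindex_bij_witness[of _ Suc "\<lambda>j. j - 1"])
       (auto simp: r_def mult.commute simp flip: exp_of_nat_mult)
  also have "\<dots> = r * (1 - r ^ N) / (1 - r)"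
    using r by (simp add: sum_distrib_left[symmetric] geometric_sum field_simps)
  also have "\<dots> \<le> r / (1 - r)"
    using r by (intro divide_right_mono) (auto simp: mult_left_le)
  also have "\<dots> = 1 / (exp a - 1)" using r by (simp add: r_def field_simps exp_minus)
  also have "\<dots> \<le> 1 / a"
  proof -
    have "a \<le> exp a - 1" using exp_ge_add_one_self[of a] by linarith
    then show ?thesis using assms by (intro divide_left_mono) auto
  qed
  finally show ?thesis .
qed

lemma phi_abs_le_large_angle:
  assumes "pi / 3 \<le> t" "t \<le> pi"
  shows "\<bar>phi n t\<bar> \<le> (2 / 3) ^ n"
proof -
  have "cos t \<le> 1 / 2" using cos_monotone_0_pi_le[of "pi / 3" t] assms by (simp add: cos_60)
  then have "\<bar>step_char t\<bar> \<le> 2 / 3"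
    by (simp add: step_char_def abs_le_iff) (use cos_ge_minus_one[of t] in linarith)
  then have "sin t ^ 2 * \<bar>step_char t\<bar> ^ n \<le> 1 * (2 / 3) ^ n"
    by (intro mult_mono power_mono) (auto simp: abs_square_le_1)
  then show ?thesis by (simp add: phi_def abs_mult power_abs)
qed

lemma trig_term_abs_le_large_angle:
  assumes "1 \<le> j" "2 * j \<le> Q" "Q \<le> 6 * j" "0 < P" "P \<le> Q"
  shows "\<bar>trig_term n j (real Q)\<bar> \<le> 4 / real P * (2 / 3) ^ n"
proof -
  have "pi / 3 \<le> 2 * pi * real j / real Q" "2 * pi * real j / real Q \<le> pi"
    using assms by (simp_all add: field_simps)
  then have "\<bar>trig_term n j (real Q)\<bar> = 4 / real Q * \<bar>phi n (2 * pi * real j / real Q)\<bar>"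
    "\<bar>phi n (2 * pi * real j / real Q)\<bar> \<le> (2 / 3) ^ n"
    using assms phi_abs_le_large_angle by (auto simp: trig_term_def abs_mult)
  moreover have "4 / real Q \<le> 4 / real P" using assms by (intro divide_left_mono) auto
  ultimately show ?thesis by (metis abs_ge_zero mult_mono zero_le_divide_iff zero_le_numeral of_nat_0_le_iff)
qed

text \<open>Padding with zeros lets the sums for \<open>P\<close>, \<open>P + 1\<close> and \<open>P + 2\<close> run over a common range.\<close>
definition padded_trig_term :: "nat \<Rightarrow> nat \<Rightarrow> nat \<Rightarrow> real" where
  "padded_trig_term n Q j = (if 2 * j \<le> Q then trig_term n j (real Q) else 0)"

lemma trig_sum_eq_sum_padded:
  assumes "Q div 2 \<le> N"
  shows "trig_sum n Q = (\<Sum>j = 1..N. padded_trig_term n Q j)"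
proof -
  have "{1..N} \<inter> {j. 2 * j \<le> Q} = {1..Q div 2}" using assms by auto
  moreover have "(\<Sum>j = 1..N. padded_trig_term n Q j) = (\<Sum>j \<in> {1..N} \<inter> {j. 2 * j \<le> Q}. trig_term n j (real Q))"
    by (simp add: padded_trig_term_def sum.inter_restrict)
  ultimately show ?thesis by (simp add: trig_sum_eq_sum_trig_term)
qed

lemma sum_smooth_second_differences:
  assumes n: "4 \<le> n" and P: "2 \<le> P"
  shows "(\<Sum>j \<in> {1..N} \<inter> {j. 4 * j \<le> P}.
            \<bar>trig_term n j (real P) - 2 * trig_term n j (real P + 1) + trig_term n j (real P + 2)\<bar>)
         \<le> 288 * poly_exp_const / (real n ^ 2 * real P)"
proof -
  define a where "a = real n * (2 * pi)\<^sup>2 / (24 * (real P + 2)\<^sup>2)"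
  define c where "c = 48 * poly_exp_const / (real n * real P ^ 3)"
  have a: "a > 0" using P n by (simp add: a_def)
  have c: "0 \<le> c" by (simp add: c_def poly_exp_const_def)
  have "(\<Sum>j \<in> {1..N} \<inter> {j. 4 * j \<le> P}.
            \<bar>trig_term n j (real P) - 2 * trig_term n j (real P + 1) + trig_term n j (real P + 2)\<bar>)
      \<le> (\<Sum>j \<in> {1..N} \<inter> {j. 4 * j \<le> P}. c * exp (- a * real j))"
  proof (rule sum_mono)
    fix j assume "j \<in> {1..N} \<inter> {j. 4 * j \<le> P}"
    then have "1 \<le> j" "4 * real j \<le> real P" by auto
    then show "\<bar>trig_term n j (real P) - 2 * trig_term n j (real P + 1) + trig_term n j (real P + 2)\<bar>
        \<le> c * exp (- a * real j)"
      using trig_term_second_difference[OF n, of j "real P"] P by (simp add: a_def c_def)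
  qed
  also have "\<dots> \<le> (\<Sum>j = 1..N. c * exp (- a * real j))"
    using c by (intro sum_mono2) auto
  also have "\<dots> = c * (\<Sum>j = 1..N. exp (- a * real j))" by (simp add: sum_distrib_left)
  also have "\<dots> \<le> c * (1 / a)" using sum_exp_neg_le[OF a] c by (intro mult_left_mono)
  also have "\<dots> \<le> c * (6 * (real P)\<^sup>2 / real n)"
  proof (intro mult_left_mono c)
    have "(real P + 2)\<^sup>2 \<le> (2 * real P)\<^sup>2" using P by (intro power_mono) auto
    moreover have "16 \<le> (2 * pi)\<^sup>2" using pi_ge_two power_mono[of 4 "2 * pi" 2] by simp
    ultimately have "24 * (real P + 2)\<^sup>2 / (real n * (2 * pi)\<^sup>2) \<le> 24 * (2 * real P)\<^sup>2 / (real n * 16)"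
      using n by (intro frac_le mult_left_mono) auto
    then show "1 / a \<le> 6 * (real P)\<^sup>2 / real n" by (simp add: a_def power_mult_distrib)
  qed
  also have "\<dots> = 288 * poly_exp_const / (real n ^ 2 * real P)"
    using P by (simp add: c_def field_simps power2_eq_square power3_eq_cube)
  finally show ?thesis .
qed

text \<open>For \<open>4 j > P\<close> the angles lie in \<open>[\<pi>/3, \<pi>]\<close>, where \<open>\<phi>\<^sub>n\<close> is exponentially small.\<close>
lemma sum_rough_second_differences:
  assumes P: "2 \<le> P" and N: "N \<le> P"
  shows "(\<Sum>j \<in> {1..N} - {j. 4 * j \<le> P}.
            \<bar>padded_trig_term n P j - 2 * padded_trig_term n (P + 1) j + padded_trig_term n (P + 2) j\<bar>)
         \<le> 16 * (2 / 3) ^ n"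
proof -
  have term_le: "\<bar>padded_trig_term n Q j\<bar> \<le> 4 / real P * (2 / 3) ^ n"
    if "j \<in> {1..N} - {j. 4 * j \<le> P}" "P \<le> Q" "Q \<le> P + 2" for Q j
    using that P trig_term_abs_le_large_angle[of j Q P n] by (auto simp: padded_trig_term_def)
  have "(\<Sum>j \<in> {1..N} - {j. 4 * j \<le> P}.
            \<bar>padded_trig_term n P j - 2 * padded_trig_term n (P + 1) j + padded_trig_term n (P + 2) j\<bar>)
      \<le> (\<Sum>j \<in> {1..N} - {j. 4 * j \<le> P}. 16 / real P * (2 / 3) ^ n)"
  proof (rule sum_mono)
    fix j assume j: "j \<in> {1..N} - {j. 4 * j \<le> P}"
    have "\<bar>padded_trig_term n P j - 2 * padded_trig_term n (P + 1) j + padded_trig_term n (P + 2) j\<bar>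
        \<le> \<bar>padded_trig_term n P j\<bar> + 2 * \<bar>padded_trig_term n (P + 1) j\<bar> + \<bar>padded_trig_term n (P + 2) j\<bar>"
      by (simp add: abs_triangle_ineq4 abs_triangle_ineq order_trans[OF abs_triangle_ineq] abs_mult
          add_mono)
    also have "\<dots> \<le> 16 / real P * (2 / 3) ^ n"
      using term_le[OF j, of P] term_le[OF j, of "P + 1"] term_le[OF j, of "P + 2"] by simp
    finally show "\<bar>padded_trig_term n P j - 2 * padded_trig_term n (P + 1) j + padded_trig_term n (P + 2) j\<bar>
        \<le> 16 / real P * (2 / 3) ^ n" .
  qed
  also have "\<dots> = real (card ({1..N} - {j. 4 * j \<le> P})) * (16 / real P * (2 / 3) ^ n)" by simp
  also have "\<dots> \<le> real P * (16 / real P * (2 / 3) ^ n)"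
  proof -
    have "card ({1..N} - {j. 4 * j \<le> P}) \<le> P" using card_mono[of "{1..N}" "{1..N} - {j. 4 * j \<le> P}"] N by auto
    then show ?thesis by (intro mult_right_mono) auto
  qed
  also have "\<dots> = 16 * (2 / 3) ^ n" using P by simp
  finally show ?thesis .
qed

lemma trig_sum_second_difference:
  assumes n: "4 \<le> n" and P: "2 \<le> P"
  shows "\<bar>trig_sum n P - 2 * trig_sum n (P + 1) + trig_sum n (P + 2)\<bar>
           \<le> 288 * poly_exp_const / (real n ^ 2 * real P) + 16 * (2 / 3) ^ n"
proof -
  define N where "N = (P + 2) div 2"
  define d where "d j = padded_trig_term n P j - 2 * padded_trig_term n (P + 1) j + padded_trig_term n (P + 2) j" for j
  have "trig_sum n P - 2 * trig_sum n (P + 1) + trig_sum n (P + 2) = (\<Sum>j = 1..N. d j)"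
    using trig_sum_eq_sum_padded[of P N n] trig_sum_eq_sum_padded[of "P + 1" N n] trig_sum_eq_sum_padded[of "P + 2" N n]
    by (simp add: N_def d_def sum.distrib sum_subtractf sum_distrib_left div_le_mono)
  also have "\<bar>\<dots>\<bar> \<le> (\<Sum>j = 1..N. \<bar>d j\<bar>)" by (rule sum_abs)
  also have "\<dots> = (\<Sum>j \<in> {1..N} \<inter> {j. 4 * j \<le> P}. \<bar>d j\<bar>) + (\<Sum>j \<in> {1..N} - {j. 4 * j \<le> P}. \<bar>d j\<bar>)"
    by (rule sum.Int_Diff) simp
  also have "(\<Sum>j \<in> {1..N} \<inter> {j. 4 * j \<le> P}. \<bar>d j\<bar>) = (\<Sum>j \<in> {1..N} \<inter> {j. 4 * j \<le> P}.
      \<bar>trig_term n j (real P) - 2 * trig_term n j (real P + 1) + trig_term n j (real P + 2)\<bar>)"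
    by (intro sum.cong) (auto simp: d_def padded_trig_term_def add_ac)
  finally have "\<bar>trig_sum n P - 2 * trig_sum n (P + 1) + trig_sum n (P + 2)\<bar> \<le>
      (\<Sum>j \<in> {1..N} \<inter> {j. 4 * j \<le> P}.
        \<bar>trig_term n j (real P) - 2 * trig_term n j (real P + 1) + trig_term n j (real P + 2)\<bar>)
      + (\<Sum>j \<in> {1..N} - {j. 4 * j \<le> P}. \<bar>d j\<bar>)" .
  moreover have "N \<le> P" using P by (simp add: N_def)
  ultimately show ?thesis
    using sum_smooth_second_differences[OF n P, of N] sum_rough_second_differences[OF P, of N n]
    unfolding d_def by linarith
qed

section \<open>A lower bound for the Motzkin numbers\<close>

lemma phi_ge_neg: "- ((1 / 3) ^ n) \<le> phi n t"
proof (cases "0 \<le> step_char t")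
  case True
  then show ?thesis by (simp add: phi_def order_trans[of _ 0])
next
  case False
  then have "\<bar>step_char t\<bar> \<le> 1 / 3"
    by (simp add: step_char_def abs_le_iff) (use cos_ge_minus_one[of t] in linarith)
  then have "sin t ^ 2 * \<bar>step_char t\<bar> ^ n \<le> 1 * (1 / 3) ^ n"
    by (intro mult_mono power_mono) (auto simp: abs_square_le_1)
  then have "\<bar>phi n t\<bar> \<le> (1 / 3) ^ n" by (simp add: phi_def abs_mult power_abs)
  then show ?thesis by (simp add: abs_le_iff)
qed

lemma phi_ge_small_angle:
  assumes n: "1 \<le> n" and t: "0 \<le> t" "t \<le> 1 / sqrt (real n)"
  shows "t\<^sup>2 / 6 \<le> phi n t"
proof -
  have "1 \<le> sqrt (real n)" using n by simp
  then have "t \<le> 1" using t by (meson order_trans divide_le_eq_1 zero_less_one less_le_trans)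
  have t2: "t\<^sup>2 \<le> 1 / real n"
  proof -
    have "t\<^sup>2 \<le> (1 / sqrt (real n))\<^sup>2" using t by (intro power_mono) auto
    then show ?thesis using n by (simp add: power_divide)
  qed
  have "t * t \<le> 1" using t \<open>t \<le> 1\<close> by (intro mult_le_one) auto
  then have "t ^ 3 \<le> t" using t mult_left_le[of "t * t" t] by (simp add: power3_eq_cube mult.assoc)
  then have "t / 2 \<le> sin t" using sin_ge_cubic[OF t(1)] t(1) by linarith
  then have "(t / 2)\<^sup>2 \<le> sin t ^ 2" using t by (intro power_mono) auto
  moreover have "2 / 3 \<le> step_char t ^ n"
  proof -
    have "1 - 1 / (3 * real n) \<le> step_char t"
      using cos_ge_quadratic[OF t(1)] t2 by (simp add: step_char_def)
    have "1 + real n * (- (1 / (3 * real n))) \<le> (1 + (- (1 / (3 * real n)))) ^ n"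
      by (rule Bernoulli_inequality) (use n in \<open>simp add: field_simps\<close>)
    then have "2 / 3 \<le> (1 - 1 / (3 * real n)) ^ n" using n by simp
    also have "\<dots> \<le> step_char t ^ n"
      using \<open>1 - 1 / (3 * real n) \<le> step_char t\<close> n by (intro power_mono) (auto simp: field_simps)
    finally show ?thesis .
  qed
  ultimately have "(t / 2)\<^sup>2 * (2 / 3) \<le> sin t ^ 2 * step_char t ^ n" by (intro mult_mono) auto
  then show ?thesis by (simp add: phi_def power_divide)
qed

lemma trig_sum_ge_window:
  assumes "P > 0" "J \<subseteq> {1..P div 2}" "\<And>j. j \<in> J \<Longrightarrow> c \<le> phi n (strip_angle P j)"
  shows "4 / real P * (real (card J) * c - real P / 2 * (1 / 3) ^ n) \<le> trig_sum n P"
proof -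
  have "real (card ({1..P div 2} - J)) \<le> real (P div 2)"
    using card_mono[of "{1..P div 2}" "{1..P div 2} - J"] by simp
  also have "\<dots> \<le> real P / 2" by linarith
  finally have "- (real P / 2 * (1 / 3) ^ n) \<le> (\<Sum>j \<in> {1..P div 2} - J. - ((1 / 3) ^ n))"
    by (simp add: mult_right_mono)
  also have "\<dots> \<le> (\<Sum>j \<in> {1..P div 2} - J. phi n (strip_angle P j))"
    by (intro sum_mono phi_ge_neg)
  finally have "real (card J) * c - real P / 2 * (1 / 3) ^ n
      \<le> (\<Sum>j \<in> J. phi n (strip_angle P j)) + (\<Sum>j \<in> {1..P div 2} - J. phi n (strip_angle P j))"
    using sum_mono[of J "\<lambda>_. c" "\<lambda>j. phi n (strip_angle P j)"] assms(3) by simp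
  also have "\<dots> = (\<Sum>j = 1..P div 2. phi n (strip_angle P j))"
    using sum.subset_diff[OF assms(2), of "\<lambda>j. phi n (strip_angle P j)"] by simp
  finally show ?thesis
    unfolding trig_sum_def using assms(1) by (intro mult_left_mono) auto
qed

text \<open>At this period the angles \<open>strip_angle P j\<close> with \<open>n < j \<le> 4 n\<close> are of size \<open>\<asymp> 1 / sqrt n\<close>,
  so each contributes \<open>\<asymp> 1 / n\<close> to \<open>trig_sum\<close>; and it exceeds \<open>2 n + 4\<close>, so it counts all Motzkin
  paths.\<close>
definition window_period :: "nat \<Rightarrow> nat" where
  "window_period n = nat \<lceil>32 * sqrt (real n)\<rceil> * n"

lemma window_period_bounds:
  assumes "1 \<le> n"
  shows "32 * sqrt (real n) * real n \<le> real (window_period n)"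
    "real (window_period n) \<le> 33 * sqrt (real n) * real n"
    "2 * n + 4 \<le> window_period n"
proof -
  have sq: "1 \<le> sqrt (real n)" using assms by simp
  have lo: "32 * sqrt (real n) \<le> real (nat \<lceil>32 * sqrt (real n)\<rceil>)" by (rule of_nat_ceiling)
  have "0 \<le> real_of_int \<lceil>32 * sqrt (real n)\<rceil>"
    using le_of_int_ceiling[of "32 * sqrt (real n)"] sq by linarith
  then have "real (nat \<lceil>32 * sqrt (real n)\<rceil>) = real_of_int \<lceil>32 * sqrt (real n)\<rceil>"
    by (intro of_nat_nat) simp
  also have "\<dots> \<le> 32 * sqrt (real n) + 1" by (rule of_int_ceiling_le_add_one)
  also have "\<dots> \<le> 33 * sqrt (real n)" using sq by simp
  finally have hi: "real (nat \<lceil>32 * sqrt (real n)\<rceil>) \<le> 33 * sqrt (real n)" .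
  show "32 * sqrt (real n) * real n \<le> real (window_period n)"
    using lo by (simp add: window_period_def mult_right_mono)
  show "real (window_period n) \<le> 33 * sqrt (real n) * real n"
    using hi by (simp add: window_period_def mult_right_mono)
  have "32 \<le> nat \<lceil>32 * sqrt (real n)\<rceil>" using lo sq by linarith
  then have "32 * n \<le> nat \<lceil>32 * sqrt (real n)\<rceil> * n" by (rule mult_le_mono1)
  then show "2 * n + 4 \<le> window_period n" unfolding window_period_def using assms by linarith
qed

lemma phi_ge_window:
  assumes n: "1 \<le> n" and j: "n + 1 \<le> j" "j \<le> 4 * n"
  shows "1 / (409 * real n) \<le> phi n (strip_angle (window_period n) j)"
proof -
  define P where "P = real (window_period n)"
  define t where "t = strip_angle (window_period n) j"
  have sq: "1 \<le> sqrt (real n)" using n by simp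
  have P: "32 * sqrt (real n) * real n \<le> P" "P \<le> 33 * sqrt (real n) * real n"
    using window_period_bounds[OF n] by (simp_all add: P_def)
  moreover have "0 < 32 * sqrt (real n) * real n" using n by simp
  ultimately have P0: "0 < P" by linarith
  have t_eq: "t = 2 * pi * real j / P" by (simp add: t_def P_def strip_angle_def)
  have "t \<le> 2 * pi * (4 * real n) / P" unfolding t_eq using j P0 by (intro divide_right_mono) auto
  also have "\<dots> \<le> 2 * pi * (4 * real n) / (32 * sqrt (real n) * real n)"
    using P P0 n sq by (intro divide_left_mono mult_pos_pos) auto
  also have "\<dots> \<le> 1 / sqrt (real n)" using pi_less_4 n sq by (simp add: field_simps)
  finally have t_le: "t \<le> 1 / sqrt (real n)" .
  have "4 / (33 * sqrt (real n)) \<le> 2 * pi * real n / (33 * sqrt (real n) * real n)"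
    using pi_ge_two n sq by (simp add: field_simps)
  also have "\<dots> \<le> 2 * pi * real n / P" using P P0 n by (intro divide_left_mono) auto
  also have "\<dots> \<le> t" unfolding t_eq using j P0 by (intro divide_right_mono) auto
  finally have "(4 / (33 * sqrt (real n)))\<^sup>2 \<le> t\<^sup>2" using sq by (intro power_mono) auto
  then have "1 / (409 * real n) \<le> t\<^sup>2 / 6" using n by (simp add: power_divide field_simps)
  also have "\<dots> \<le> phi n t" using P0 by (intro phi_ge_small_angle[OF n _ t_le]) (simp add: t_eq)
  finally show ?thesis by (simp add: t_def)
qed

definition M_lower_bound :: "nat \<Rightarrow> real" where
  "M_lower_bound n = 4 / (4499 * real n * sqrt (real n)) - 2 / 3 ^ n"

lemma M_ge_lower_bound:
  assumes n: "1 \<le> n"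
  shows "3 ^ n * M_lower_bound n \<le> real (M n)"
proof -
  define P where "P = window_period n"
  have P: "32 * sqrt (real n) * real n \<le> real P" "real P \<le> 33 * sqrt (real n) * real n" "2 * n + 4 \<le> P"
    using window_period_bounds[OF n] by (simp_all add: P_def)
  have sq: "1 \<le> sqrt (real n)" using n by simp
  have "{n + 1..4 * n} \<subseteq> {1..P div 2}"
  proof -
    have "32 * real n \<le> 32 * sqrt (real n) * real n" using sq by (simp add: mult_right_mono)
    then have "real (32 * n) \<le> real P" using P(1) by simp
    then have "32 * n \<le> P" by (simp only: of_nat_le_iff)
    then show ?thesis by auto
  qed
  then have "4 / real P * (real (card {n + 1..4 * n}) * (1 / (409 * real n)) - real P / 2 * (1 / 3) ^ n)
      \<le> trig_sum n P"
    using P(3) phi_ge_window[OF n] by (intro trig_sum_ge_window) (auto simp: P_def)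
  moreover have "M_lower_bound n \<le> 4 / real P * (real (card {n + 1..4 * n}) * (1 / (409 * real n)) - real P / 2 * (1 / 3) ^ n)"
  proof -
    have "4 / (4499 * real n * sqrt (real n)) = 12 / (409 * (33 * sqrt (real n) * real n))"
      by simp
    also have "\<dots> \<le> 12 / (409 * real P)"
      using P(2,3) n by (intro divide_left_mono mult_left_mono mult_pos_pos) auto
    finally have "4 / (4499 * real n * sqrt (real n)) \<le> 12 / (409 * real P)" .
    then show ?thesis using P(3) n by (simp add: M_lower_bound_def field_simps power_divide)
  qed
  moreover have "real (M n) = 3 ^ n * trig_sum n P"
    using amp_count_eq_M[OF P(3)] amp_count_eq_trig_sum[of P n] P(3) by simp
  ultimately show ?thesis by simp
qed

section \<open>The limit\<close>

lemma amp_count_second_difference: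
  assumes "4 \<le> n" "2 \<le> P"
  shows "\<bar>2 * real (amp_count n (P + 1)) - real (amp_count n P) - real (amp_count n (P + 2))\<bar>
           \<le> 3 ^ n * (288 * poly_exp_const / (real n ^ 2 * real P) + 16 * (2 / 3) ^ n)"
proof -
  have "2 * real (amp_count n (P + 1)) - real (amp_count n P) - real (amp_count n (P + 2))
      = - (3 ^ n * (trig_sum n P - 2 * trig_sum n (P + 1) + trig_sum n (P + 2)))"
    using assms amp_count_eq_trig_sum[of P n] amp_count_eq_trig_sum[of "P + 1" n]
      amp_count_eq_trig_sum[of "P + 2" n] by (simp add: algebra_simps)
  then show ?thesis
    using trig_sum_second_difference[OF assms] by (simp add: abs_mult mult_left_mono)
qed

lemma sum_inverse_Suc_le_ln: "(\<Sum>i\<le>n. 1 / (real i + 1)) \<le> 1 + ln (real n + 1)"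
proof (induction n)
  case (Suc n)
  have "ln ((real n + 1) / (real n + 2)) \<le> (real n + 1) / (real n + 2) - 1"
    by (rule ln_le_minus_one) simp
  also have "\<dots> = - (1 / (real n + 2))" by (simp add: field_simps)
  finally have "1 / (real n + 2) \<le> ln (real n + 2) - ln (real n + 1)"
    by (simp add: ln_div)
  then show ?case using Suc by (simp add: add.commute add.left_commute)
qed simp

definition error_bound :: "nat \<Rightarrow> real" where
  "error_bound n = 144 * poly_exp_const * (1 + ln (real n + 1)) / real n ^ 2 + 16 * (real n + 1) * (2 / 3) ^ n"

lemma twice_b_minus_M_le:
  assumes n: "4 \<le> n"
  shows "\<bar>2 * real (b n) - real (M n)\<bar> \<le> 3 ^ n * error_bound n"
proof -
  have "\<bar>2 * real (b n) - real (M n)\<bar>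
      \<le> (\<Sum>i\<le>n. \<bar>2 * real (amp_count n (2 * i + 3)) - real (amp_count n (2 * i + 2))
                    - real (amp_count n (2 * i + 4))\<bar>)"
    unfolding twice_b_minus_M by (rule sum_abs)
  also have "\<dots> \<le> (\<Sum>i\<le>n. 3 ^ n * (144 * poly_exp_const / real n ^ 2 * (1 / (real i + 1)) + 16 * (2 / 3) ^ n))"
  proof (rule sum_mono)
    fix i
    have nonzero: "real n ^ 2 * real (2 * i + 2) \<noteq> 0" "real n ^ 2 * (real i + 1) \<noteq> 0" using n by auto
    have "288 * poly_exp_const / (real n ^ 2 * real (2 * i + 2)) = 144 * poly_exp_const / (real n ^ 2 * (real i + 1))"
      by (subst frac_eq_eq[OF nonzero]) (simp add: algebra_simps)
    then have "288 * poly_exp_const / (real n ^ 2 * real (2 * i + 2))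
        = 144 * poly_exp_const / real n ^ 2 * (1 / (real i + 1))"
      by simp
    moreover have "2 * i + 3 = (2 * i + 2) + 1" "2 * i + 4 = (2 * i + 2) + 2" by simp_all
    ultimately show "\<bar>2 * real (amp_count n (2 * i + 3)) - real (amp_count n (2 * i + 2)) - real (amp_count n (2 * i + 4))\<bar>
        \<le> 3 ^ n * (144 * poly_exp_const / real n ^ 2 * (1 / (real i + 1)) + 16 * (2 / 3) ^ n)"
      using amp_count_second_difference[OF n, of "2 * i + 2"] by (simp only:)
  qed
  also have "\<dots> = 3 ^ n * (\<Sum>i\<le>n. 144 * poly_exp_const / real n ^ 2 * (1 / (real i + 1)) + 16 * (2 / 3) ^ n)"
    by (simp only: sum_distrib_left)
  also have "\<dots> = 3 ^ n * (144 * poly_exp_const / real n ^ 2 * (\<Sum>i\<le>n. 1 / (real i + 1)) + (real n + 1) * (16 * (2 / 3) ^ n))"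
    by (simp only: sum.distrib sum_distrib_left[symmetric]) simp
  also have "\<dots> \<le> 3 ^ n * (144 * poly_exp_const / real n ^ 2 * (1 + ln (real n + 1)) + (real n + 1) * (16 * (2 / 3) ^ n))"
    using sum_inverse_Suc_le_ln[of n]
    by (intro mult_left_mono add_mono order_refl) (auto simp: poly_exp_const_def)
  also have "\<dots> = 3 ^ n * error_bound n" by (simp add: error_bound_def)
  finally show ?thesis .
qed

lemma error_ratio_tendsto_0: "(\<lambda>n. error_bound n / (2 * M_lower_bound n)) \<longlonglongrightarrow> 0"
  unfolding error_bound_def M_lower_bound_def poly_exp_const_def power_divide by real_asymp

lemma eventually_M_lower_bound_pos: "eventually (\<lambda>n. 0 < M_lower_bound n) sequentially"
  unfolding M_lower_bound_def by real_asymp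

theorem mainTheorem6:
  shows "(\<lambda>n. real (b n) / real (M n)) \<longlonglongrightarrow> 1 / 2"
proof -
  have "eventually (\<lambda>n. norm (real (b n) / real (M n) - 1 / 2) \<le> norm (error_bound n / (2 * M_lower_bound n)) * 1)
      sequentially"
    using eventually_M_lower_bound_pos eventually_ge_at_top[of 4]
  proof eventually_elim
    case (elim n)
    then have lower: "0 < 3 ^ n * M_lower_bound n" "3 ^ n * M_lower_bound n \<le> real (M n)"
      using M_ge_lower_bound[of n] by auto
    have "\<bar>real (b n) / real (M n) - 1 / 2\<bar> = \<bar>2 * real (b n) - real (M n)\<bar> / (2 * real (M n))"
      using lower by (simp add: field_simps abs_divide)
    also have "\<dots> \<le> 3 ^ n * error_bound n / (2 * (3 ^ n * M_lower_bound n))"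
      using twice_b_minus_M_le[of n] lower elim by (intro frac_le) auto
    also have "\<dots> \<le> \<bar>error_bound n / (2 * M_lower_bound n)\<bar>" by (simp del: abs_divide)
    finally show ?case by simp
  qed
  with error_ratio_tendsto_0 have "(\<lambda>n. real (b n) / real (M n) - 1 / 2) \<longlonglongrightarrow> 0"
    by (rule tendsto_0_le)
  then show ?thesis by (simp add: LIM_zero_iff)
qed

end
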